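(* Let $K\ge 2$ and let $\{\ell_t^a\}_{t\ge1,\,a\in[K]}$ be an oblivious adversarial loss sequence with $\ell_t^a\in[0,1]$ and effective loss range $\varepsilon$. Then for every $T\ge 1$ the expected regret of SODA satisfies \[ \mathcal{R}_T \le 4\varepsilon\sqrt{(K-1)\ln K}\,\sqrt{T+(K-1)\sqrt{T}\left(2+\sqrt{\ln\!\big(\sqrt{T}(K-1)\big)/2}\right)} + 4(K-1)\ln K . \]
   Context: Setting (prediction with limited advice, one extra observation): there are $K$ arms, $[K]=\{1,\dots,K\}$, and losses $\ell_t^a\in[0,1]$ for rounds $t=1,2,\dots$. In each round $t$ the learner picks a primary arm $A_t\in[K]$, suffers and observes $\ell_t^{A_t}$, and additionally picks a secondary arm $B_t$ (chosen after $A_t$) and observes, but does not suffer, $\ell_t^{B_t}$. An oblivious adversary fixes all losses (deterministically) before the game starts. The effective loss range is the smallest $\varepsilon$ such that $|\ell_t^a-\ell_t^{a'}|\le\varepsilon$ for all $t$ and all $a,a'\in[K]$ (almost surely); $\varepsilon\le 1$. The expected regret is $\mathcal{R}_T=\mathbb{E}[\sum_{t=1}^T\ell_t^{A_t}]-\min_{a\in[K]}\mathbb{E}[\sum_{t=1}^T\ell_t^a]$, expectations over all randomness. SODA (Second Order Difference Adjustments): for each round $t$, draw $A_t\sim \mathbf p_t$, then draw $B_t$ uniformly from $[K]\setminus\{A_t\}$, observe $\ell_t^{A_t},\ell_t^{B_t}$, and set the loss difference estimators $\widetilde{\Delta\ell}_t^a=(K-1)\mathbb 1(B_t=a)(\ell_t^{B_t}-\ell_t^{A_t})$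 for all $a\in[K]$. Let $D_t(a)=\sum_{s=1}^t\widetilde{\Delta\ell}_s^a$, $S_t(a)=\sum_{s=1}^t(\widetilde{\Delta\ell}_s^a)^2$, with $D_0=S_0=0$. The learning rate is $\eta_t=\min\{\sqrt{\ln K/(\max_a S_{t-1}(a)+(K-1)^2)},\,1/(2(K-1))\}$ and \[p_t^a=\frac{\exp(-\eta_tD_{t-1}(a)-\eta_t^2S_{t-1}(a))}{\sum_{b=1}^K\exp(-\eta_tD_{t-1}(b)-\eta_t^2S_{t-1}(b))}\] (so $\mathbf p_1$ is uniform). *)

theory Defs
  imports "HOL-Probability.Probability"
begin

text \<open>Arms are 1..K; rounds are t = 1,2,...; losses are l t a.
  A history of length n is the list of pairs (A_s, B_s) for rounds s = 1..n,
  the entry for round s being at list index s - 1.\<close>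

definition soda_est :: "nat \<Rightarrow> (nat \<Rightarrow> nat \<Rightarrow> real) \<Rightarrow> nat \<Rightarrow> nat \<times> nat \<Rightarrow> nat \<Rightarrow> real" where
  "soda_est K l t ab a =
     (real K - 1) * (if snd ab = a then 1 else 0) * (l t (snd ab) - l t (fst ab))"

definition soda_D :: "nat \<Rightarrow> (nat \<Rightarrow> nat \<Rightarrow> real) \<Rightarrow> (nat \<times> nat) list \<Rightarrow> nat \<Rightarrow> real" where
  "soda_D K l h a = (\<Sum>s<length h. soda_est K l (Suc s) (h ! s) a)"

definition soda_S :: "nat \<Rightarrow> (nat \<Rightarrow> nat \<Rightarrow> real) \<Rightarrow> (nat \<times> nat) list \<Rightarrow> nat \<Rightarrow> real" where
  "soda_S K l h a = (\<Sum>s<length h. (soda_est K l (Suc s) (h ! s) a)\<^sup>2)"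

text \<open>Learning rate eta_t, computed from the history of rounds 1..t-1.\<close>
definition soda_eta :: "nat \<Rightarrow> (nat \<Rightarrow> nat \<Rightarrow> real) \<Rightarrow> (nat \<times> nat) list \<Rightarrow> real" where
  "soda_eta K l h =
     min (sqrt (ln (real K) / (Max ((\<lambda>a. soda_S K l h a) ` {1..K}) + (real K - 1)\<^sup>2)))
         (1 / (2 * (real K - 1)))"

definition soda_weight :: "nat \<Rightarrow> (nat \<Rightarrow> nat \<Rightarrow> real) \<Rightarrow> (nat \<times> nat) list \<Rightarrow> nat \<Rightarrow> real" where
  "soda_weight K l h a =
     exp (- soda_eta K l h * soda_D K l h a - (soda_eta K l h)\<^sup>2 * soda_S K l h a)"

definition soda_p :: "nat \<Rightarrow> (nat \<Rightarrow> nat \<Rightarrow> real) \<Rightarrow> (nat \<times> nat) list \<Rightarrow> nat pmf" where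
  "soda_p K l h = embed_pmf (\<lambda>a. if a \<in> {1..K}
       then soda_weight K l h a / (\<Sum>b\<in>{1..K}. soda_weight K l h b) else 0)"

primrec soda_traj :: "nat \<Rightarrow> (nat \<Rightarrow> nat \<Rightarrow> real) \<Rightarrow> nat \<Rightarrow> (nat \<times> nat) list pmf" where
  "soda_traj K l 0 = return_pmf []"
| "soda_traj K l (Suc n) =
     bind_pmf (soda_traj K l n) (\<lambda>h.
     bind_pmf (soda_p K l h) (\<lambda>A.
     bind_pmf (pmf_of_set ({1..K} - {A})) (\<lambda>B.
     return_pmf (h @ [(A, B)]))))"

definition soda_regret :: "nat \<Rightarrow> (nat \<Rightarrow> nat \<Rightarrow> real) \<Rightarrow> nat \<Rightarrow> real" where
  "soda_regret K l T =
     measure_pmf.expectation (soda_traj K l T) (\<lambda>h. \<Sum>t\<in>{1..T}. l t (fst (h ! (t - 1))))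
     - Min ((\<lambda>a. \<Sum>t\<in>{1..T}. l t a) ` {1..K})"

definition effective_range :: "nat \<Rightarrow> (nat \<Rightarrow> nat \<Rightarrow> real) \<Rightarrow> real \<Rightarrow> bool" where
  "effective_range K l eps \<longleftrightarrow>
     ((\<forall>t\<ge>1. \<forall>a\<in>{1..K}. \<forall>a'\<in>{1..K}. \<bar>l t a - l t a'\<bar> \<le> eps) \<and>
      (\<forall>e. (\<forall>t\<ge>1. \<forall>a\<in>{1..K}. \<forall>a'\<in>{1..K}. \<bar>l t a - l t a'\<bar> \<le> e) \<longrightarrow> eps \<le> e))"

end

theory Submission
  imports Defs
begin

text \<open>
  For a best arm a the expected regret is E[-D_T(a)], since the learner's loss plus the estimate for a
  is conditionally unbiased for the loss of a. Pathwise, the potential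
  Phi(eta, h) = (1/eta) ln ((1/K) sum_a exp (-eta D(a) - eta^2 S(a))) drops by at least <p_t, est_t>
  in each round (by exp (-x - x^2) <= 1 - x), and lowering the learning rate from eta to eta' raises it by
  at most (eta - eta') max_a S(a). Telescoping gives
  sum_t <p_t, est_t> - D_T(a) <= 3 sqrt (ln K max_a S_T(a)) + 2 (K - 1) ln K,
  and the sum on the left has mean zero. Finally S_T(a) <= (K - 1)^2 eps^2 N_T(a), where N_T(a) counts the
  rounds with B_t = a. Each round hits a with conditional probability at most 1/(K - 1), so Hoeffding's
  lemma bounds the exponential moments of the counts, giving
  E[max_a N_T(a)] <= T/(K - 1) + sqrt (T ln K / 2); Jensen's inequality for the square root concludes.
\<close>

lemma exp_neg_minus_square_le:
  fixes x :: real
  assumes "\<bar>x\<bar> \<le> 1/2"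
  shows "exp (- x - x\<^sup>2) \<le> 1 - x"
proof -
  have "- x - x\<^sup>2 \<le> ln (1 - x)"
  proof (cases "x \<ge> 0")
    case True
    define f where "f = (\<lambda>y::real. ln (1 - y) + y + y\<^sup>2)"
    have "f 0 \<le> f x"
    proof (rule DERIV_nonneg_imp_nondecreasing[OF True])
      fix y assume y: "0 \<le> y" "y \<le> x"
      have "1 - y > 0" using y assms by auto
      have "(f has_real_derivative (y * (1 - 2 * y) / (1 - y))) (at y)"
        unfolding f_def using \<open>1 - y > 0\<close>
        by (auto intro!: derivative_eq_intros simp: power2_eq_square field_simps)
      moreover have "y * (1 - 2 * y) / (1 - y) \<ge> 0"
        using y assms \<open>1 - y > 0\<close> by (intro divide_nonneg_pos mult_nonneg_nonneg) auto
      ultimately show "\<exists>z. (f has_real_derivative z) (at y) \<and> 0 \<le> z" by blast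
    qed
    then show ?thesis by (simp add: f_def)
  next
    case False
    have "(-x) - (-x)\<^sup>2 \<le> ln (1 + (-x))"
      using False assms by (intro ln_one_plus_pos_lower_bound) auto
    then show ?thesis by simp
  qed
  then have "exp (- x - x\<^sup>2) \<le> exp (ln (1 - x))" by simp
  also have "\<dots> = 1 - x" using assms by simp
  finally show ?thesis .
qed

lemma powr_le_affine:
  fixes y a :: real
  assumes "y > 0" "0 \<le> a" "a \<le> 1"
  shows "y powr a \<le> a * y + (1 - a)"
  using Youngs_inequality_0[of a "1 - a" y 1] assms by simp

lemma sum_powr_le_mean_powr:
  fixes w :: "'a \<Rightarrow> real"
  assumes "finite A" "A \<noteq> {}" "\<And>a. a \<in> A \<Longrightarrow> w a > 0" "0 \<le> \<alpha>" "\<alpha> \<le> 1"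
  shows "(\<Sum>a\<in>A. w a powr \<alpha>) \<le> real (card A) * ((\<Sum>a\<in>A. w a) / real (card A)) powr \<alpha>"
proof -
  define m where "m = (\<Sum>a\<in>A. w a) / real (card A)"
  have card: "real (card A) > 0" using assms(1,2) by (simp add: card_gt_0_iff)
  have m0: "m > 0" unfolding m_def using assms(1-3) card by (intro divide_pos_pos sum_pos) auto
  have "(\<Sum>a\<in>A. w a powr \<alpha>) = (\<Sum>a\<in>A. m powr \<alpha> * (w a / m) powr \<alpha>)"
    using m0 assms(3) by (intro sum.cong refl) (simp add: powr_divide less_imp_le)
  also have "\<dots> \<le> (\<Sum>a\<in>A. m powr \<alpha> * (\<alpha> * (w a / m) + (1 - \<alpha>)))"
    using m0 assms(3-5) by (intro sum_mono mult_left_mono powr_le_affine) auto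
  also have "\<dots> = (\<Sum>a\<in>A. (m powr \<alpha> * \<alpha> / m) * w a + m powr \<alpha> * (1 - \<alpha>))"
    by (intro sum.cong refl) (simp add: algebra_simps)
  also have "\<dots> = (m powr \<alpha> * \<alpha> / m) * (\<Sum>a\<in>A. w a) + m powr \<alpha> * (1 - \<alpha>) * real (card A)"
    by (simp add: sum.distrib sum_distrib_left)
  also have "(\<Sum>a\<in>A. w a) = m * real (card A)"
    unfolding m_def using card by simp
  also have "(m powr \<alpha> * \<alpha> / m) * (m * real (card A)) + m powr \<alpha> * (1 - \<alpha>) * real (card A)
      = real (card A) * m powr \<alpha>"
    using m0 by (simp add: field_simps)
  finally show ?thesis unfolding m_def .
qed

lemma sqrt_le_tangent:
  fixes x y :: real
  assumes "x \<ge> 0" "y > 0"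
  shows "sqrt x \<le> (x + y) / (2 * sqrt y)"
proof -
  have "0 \<le> (sqrt x - sqrt y)\<^sup>2" by simp
  then have "2 * sqrt x * sqrt y \<le> x + y" using assms by (simp add: power2_eq_square algebra_simps)
  then show ?thesis using assms by (simp add: field_simps)
qed

lemma sqrt_ln_le_twice_ln:
  fixes x :: real
  assumes "x \<ge> 2"
  shows "sqrt (ln x) \<le> 2 * ln x"
proof (rule real_le_lsqrt)
  have "1/2 \<le> ln (2::real)" using ln_le_minus_one[of "1/(2::real)"] by (simp add: ln_div)
  also have "\<dots> \<le> ln x" using assms by simp
  finally have "1/2 \<le> ln x" .
  then have "ln x * 1 \<le> ln x * (4 * ln x)" by (intro mult_left_mono) auto
  then show "ln x \<le> (2 * ln x)\<^sup>2" by (simp add: power2_eq_square)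
qed (use assms in auto)

lemma le_ln_sum_exp:
  fixes f :: "'a \<Rightarrow> real"
  assumes "finite A" "a \<in> A" "lam > 0"
  shows "f a \<le> ln (\<Sum>b\<in>A. exp (lam * f b)) / lam"
proof -
  have le: "exp (lam * f a) \<le> (\<Sum>b\<in>A. exp (lam * f b))" using assms by (intro member_le_sum) auto
  then have "ln (exp (lam * f a)) \<le> ln (\<Sum>b\<in>A. exp (lam * f b))"
    by (intro ln_mono order_less_le_trans[OF exp_gt_zero le]) auto
  then show ?thesis using assms(3) by (simp add: field_simps)
qed

lemma sqrt_T_ln_le:
  fixes k :: real and T :: nat
  assumes "k \<ge> 2" "T \<ge> 1"
  shows "sqrt (real T * ln k / 2) \<le> sqrt (real T) * (2 + sqrt (ln (sqrt (real T) * (k - 1)) / 2))"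
proof -
  define L where "L = ln (sqrt (real T) * (k - 1))"
  have sT: "sqrt (real T) \<ge> 1" using assms by simp
  have "1 * 1 \<le> sqrt (real T) * (k - 1)" using sT assms by (intro mult_mono) auto
  then have L0: "L \<ge> 0" unfolding L_def by simp
  have "ln k - ln (k - 1) = ln (k / (k - 1))" using assms by (simp add: ln_div)
  also have "\<dots> \<le> k / (k - 1) - 1" using assms by (intro ln_le_minus_one) auto
  also have "\<dots> \<le> 1" using assms by (simp add: field_simps)
  finally have "ln k \<le> ln (k - 1) + 1" by simp
  also have "ln (k - 1) \<le> L" unfolding L_def using assms sT
    by (subst ln_le_cancel_iff) (auto simp: mult_le_cancel_right1)
  finally have "sqrt (ln k / 2) \<le> sqrt (4 + L / 2)" by simp
  also have "\<dots> \<le> sqrt 4 + sqrt (L / 2)" by (rule sqrt_add_le_add_sqrt) (use L0 in auto)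
  also have "sqrt 4 = (2::real)" by (simp add: real_sqrt_eq_iff[symmetric])
  finally have "sqrt (real T) * sqrt (ln k / 2) \<le> sqrt (real T) * (2 + sqrt (L / 2))"
    by (intro mult_left_mono) auto
  then show ?thesis unfolding L_def by (simp add: real_sqrt_mult[symmetric])
qed

lemma expectation_ln_le:
  fixes p :: "'a pmf" and X :: "'a \<Rightarrow> real"
  assumes "finite (set_pmf p)" "\<And>x. x \<in> set_pmf p \<Longrightarrow> X x > 0"
    and "measure_pmf.expectation p X \<le> z" "z > 0"
  shows "measure_pmf.expectation p (\<lambda>x. ln (X x)) \<le> ln z"
proof -
  have "measure_pmf.expectation p (\<lambda>x. ln (X x)) \<le> measure_pmf.expectation p (\<lambda>x. ln z + X x / z - 1)"
  proof (intro integral_mono_AE integrable_measure_pmf_finite assms(1))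
    show "AE x in measure_pmf p. ln (X x) \<le> ln z + X x / z - 1"
    proof (unfold AE_measure_pmf_iff, intro ballI)
      fix x assume x: "x \<in> set_pmf p"
      have "ln (X x / z) \<le> X x / z - 1" using assms(2)[OF x] assms(4) by (intro ln_le_minus_one) auto
      then show "ln (X x) \<le> ln z + X x / z - 1" using assms(2)[OF x] assms(4) by (simp add: ln_div)
    qed
  qed
  also have "\<dots> = ln z + measure_pmf.expectation p X / z - 1"
    by (simp add: integral_add integrable_measure_pmf_finite[OF assms(1)])
  also have "\<dots> \<le> ln z" using assms(3,4) by (simp add: field_simps)
  finally show ?thesis .
qed

lemma expectation_sqrt_le:
  fixes p :: "'a pmf" and X :: "'a \<Rightarrow> real"
  assumes "finite (set_pmf p)" "\<And>x. x \<in> set_pmf p \<Longrightarrow> X x \<ge> 0"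
    and "measure_pmf.expectation p X \<le> z" "z > 0"
  shows "measure_pmf.expectation p (\<lambda>x. sqrt (X x)) \<le> sqrt z"
proof -
  have "measure_pmf.expectation p (\<lambda>x. sqrt (X x)) \<le> measure_pmf.expectation p (\<lambda>x. (X x + z) / (2 * sqrt z))"
    by (intro integral_mono_AE integrable_measure_pmf_finite assms(1))
       (auto simp: AE_measure_pmf_iff intro: sqrt_le_tangent assms(2,4))
  also have "\<dots> = (measure_pmf.expectation p X + z) / (2 * sqrt z)"
    by (simp add: integral_add add_divide_distrib integrable_measure_pmf_finite[OF assms(1)])
  also have "\<dots> \<le> (z + z) / (2 * sqrt z)" using assms(3,4) by (intro divide_right_mono) auto
  also have "\<dots> = sqrt z" using assms(4) by (simp add: field_simps)
  finally show ?thesis .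
qed

locale soda =
  fixes K :: nat and l :: "nat \<Rightarrow> nat \<Rightarrow> real"
  assumes two_le_K: "K \<ge> 2"
    and loss_range: "\<forall>t\<ge>1. \<forall>a\<in>{1..K}. 0 \<le> l t a \<and> l t a \<le> 1"
begin

abbreviation "est \<equiv> soda_est K l"
abbreviation "D \<equiv> soda_D K l"
abbreviation "S \<equiv> soda_S K l"
abbreviation "eta \<equiv> soda_eta K l"
abbreviation "traj \<equiv> soda_traj K l"

definition weight_sum :: "(nat \<times> nat) list \<Rightarrow> real" where
  "weight_sum h = (\<Sum>b\<in>{1..K}. soda_weight K l h b)"

definition prob :: "(nat \<times> nat) list \<Rightarrow> nat \<Rightarrow> real" where
  "prob h a = soda_weight K l h a / weight_sum h"

definition valid_history :: "(nat \<times> nat) list \<Rightarrow> bool" where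
  "valid_history h \<longleftrightarrow> set h \<subseteq> {1..K} \<times> {1..K}"

text \<open>The conditional expectation of \<open>f (A\<^sub>t, B\<^sub>t)\<close> given the history \<open>h\<close> of the earlier rounds.\<close>
definition round_exp :: "(nat \<times> nat) list \<Rightarrow> (nat \<times> nat \<Rightarrow> real) \<Rightarrow> real" where
  "round_exp h f = (\<Sum>A\<in>{1..K}. prob h A * ((\<Sum>B\<in>{1..K} - {A}. f (A, B)) / (real K - 1)))"

lemma K_minus_one_ge_one: "real K - 1 \<ge> 1"
  using two_le_K by simp

lemma ln_K_pos: "ln (real K) > 0"
  using two_le_K by simp

lemma weight_pos: "soda_weight K l h a > 0"
  by (simp add: soda_weight_def)

lemma weight_sum_pos: "weight_sum h > 0"
  unfolding weight_sum_def using two_le_K by (intro sum_pos) (auto simp: weight_pos)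

lemma prob_pos: "prob h a > 0"
  unfolding prob_def using weight_sum_pos[of h] weight_pos[of h a] by simp

lemma sum_prob: "(\<Sum>a\<in>{1..K}. prob h a) = 1"
  unfolding prob_def using weight_sum_pos[of h] by (simp add: sum_divide_distrib[symmetric] weight_sum_def)

lemma pmf_soda_p: "pmf (soda_p K l h) a = (if a \<in> {1..K} then prob h a else 0)"
proof -
  define f where "f a = (if a \<in> {1..K} then prob h a else 0)" for a
  have nonneg: "\<forall>a. 0 \<le> f a" by (auto simp: f_def less_imp_le[OF prob_pos])
  have "(\<integral>\<^sup>+a. ennreal (f a) \<partial>count_space UNIV) = (\<Sum>a\<in>{1..K}. ennreal (f a))"
    by (rule nn_integral_count_space') (auto simp: f_def)
  also have "\<dots> = ennreal (\<Sum>a\<in>{1..K}. prob h a)"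
    by (subst sum_ennreal) (auto simp: f_def less_imp_le[OF prob_pos])
  finally have "(\<integral>\<^sup>+a. ennreal (f a) \<partial>count_space UNIV) = 1" using sum_prob[of h] by simp
  moreover have "soda_p K l h = embed_pmf f"
    unfolding soda_p_def f_def prob_def weight_sum_def ..
  ultimately have "pmf (soda_p K l h) a = f a" by (simp add: pmf_embed_pmf[OF nonneg[rule_format]])
  then show ?thesis by (simp add: f_def)
qed

lemma set_pmf_soda_p: "set_pmf (soda_p K l h) = {1..K}"
  using prob_pos by (auto simp: set_pmf_eq pmf_soda_p less_le)

lemma secondary_arms_nonempty: "A \<in> {1..K} \<Longrightarrow> {1..K} - {A} \<noteq> {}"
proof -
  assume "A \<in> {1..K}"
  then have "(if A = 1 then 2 else 1) \<in> {1..K} - {A}" using two_le_K by auto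
  then show ?thesis by blast
qed

lemma set_pmf_secondary: "A \<in> {1..K} \<Longrightarrow> set_pmf (pmf_of_set ({1..K} - {A})) = {1..K} - {A}"
  by (rule set_pmf_of_set[OF secondary_arms_nonempty]) auto

lemma set_pmf_traj: "set_pmf (traj n) \<subseteq> {h. length h = n \<and> valid_history h}"
proof (induction n)
  case 0
  then show ?case by (simp add: valid_history_def)
next
  case (Suc n)
  show ?case
  proof
    fix h' assume "h' \<in> set_pmf (traj (Suc n))"
    then obtain h A B where h: "h \<in> set_pmf (traj n)" and A: "A \<in> {1..K}"
      and B: "B \<in> set_pmf (pmf_of_set ({1..K} - {A}))" and h': "h' = h @ [(A, B)]"
      by (auto simp: set_pmf_soda_p)
    show "h' \<in> {h. length h = Suc n \<and> valid_history h}"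
      using Suc h A B h' set_pmf_secondary[OF A] by (auto simp: valid_history_def)
  qed
qed

lemma valid_of_traj: "h \<in> set_pmf (traj n) \<Longrightarrow> length h = n \<and> valid_history h"
  using set_pmf_traj by blast

lemma finite_set_pmf_traj: "finite (set_pmf (traj n))"
proof (rule finite_subset[OF set_pmf_traj])
  show "finite {h. length h = n \<and> valid_history h}"
    using finite_lists_length_eq[of "{1..K} \<times> {1..K}" n]
    by (rule finite_subset[rotated]) (auto simp: valid_history_def)
qed

lemma integrable_traj [simp]: "integrable (measure_pmf (traj n)) (f :: _ \<Rightarrow> real)"
  by (rule integrable_measure_pmf_finite[OF finite_set_pmf_traj])

lemma expectation_traj_Suc:
  "measure_pmf.expectation (traj (Suc n)) f =
     measure_pmf.expectation (traj n) (\<lambda>h. round_exp h (\<lambda>x. f (h @ [x])))"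
proof -
  define round where
    "round h A = bind_pmf (pmf_of_set ({1..K} - {A})) (\<lambda>B. return_pmf (h @ [(A, B)]))" for h A
  define step where "step h = bind_pmf (soda_p K l h) (round h)" for h
  have finite_round: "finite (set_pmf (round h A))" if "A \<in> {1..K}" for h A
    using set_pmf_secondary[OF that] by (simp add: round_def)
  have finite_step: "finite (set_pmf (step h))" for h
    using finite_round by (auto simp: step_def set_pmf_soda_p)
  have round_exp_step: "measure_pmf.expectation (step h) f = round_exp h (\<lambda>x. f (h @ [x]))" for h
  proof -
    have "measure_pmf.expectation (step h) f =
        (\<Sum>A\<in>{1..K}. pmf (soda_p K l h) A *\<^sub>R measure_pmf.expectation (round h A) f)"
      unfolding step_def by (rule pmf_expectation_bind) (auto simp: set_pmf_soda_p finite_round)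
    also have "\<dots> = round_exp h (\<lambda>x. f (h @ [x]))"
      unfolding round_exp_def
    proof (rule sum.cong[OF refl])
      fix A assume A: "A \<in> {1..K}"
      have "measure_pmf.expectation (round h A) f
          = (\<Sum>B\<in>{1..K} - {A}. f (h @ [(A, B)]) /\<^sub>R real (card ({1..K} - {A})))"
        unfolding round_def by (subst pmf_expectation_bind_pmf_of_set) (use secondary_arms_nonempty[OF A] in auto)
      also have "\<dots> = (\<Sum>B\<in>{1..K} - {A}. f (h @ [(A, B)])) / (real K - 1)"
        using A two_le_K by (simp add: card_Diff_singleton of_nat_diff sum_divide_distrib divide_inverse_commute sum_distrib_left)
      finally show "pmf (soda_p K l h) A *\<^sub>R measure_pmf.expectation (round h A) f
          = prob h A * ((\<Sum>B\<in>{1..K} - {A}. f (h @ [(A, B)])) / (real K - 1))"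
        using A by (simp add: pmf_soda_p)
    qed
    finally show ?thesis .
  qed
  have "measure_pmf.expectation (traj (Suc n)) f
      = (\<Sum>h\<in>set_pmf (traj n). pmf (traj n) h *\<^sub>R measure_pmf.expectation (step h) f)"
    unfolding soda_traj.simps step_def round_def
    by (rule pmf_expectation_bind[OF finite_set_pmf_traj _ order_refl]) (use finite_step in \<open>simp add: step_def round_def\<close>)
  also have "\<dots> = measure_pmf.expectation (traj n) (\<lambda>h. round_exp h (\<lambda>x. f (h @ [x])))"
    unfolding round_exp_step by (rule integral_measure_pmf[OF finite_set_pmf_traj, symmetric]) auto
  finally show ?thesis .
qed

lemma expectation_traj_le_of_supermartingale:
  assumes "\<And>n h. length h = n \<Longrightarrow> valid_history h \<Longrightarrow> round_exp h (\<lambda>x. G (Suc n) (h @ [x])) \<le> G n h"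
  shows "measure_pmf.expectation (traj T) (G T) \<le> G 0 []"
proof (induction T)
  case (Suc n)
  have "measure_pmf.expectation (traj (Suc n)) (G (Suc n))
      = measure_pmf.expectation (traj n) (\<lambda>h. round_exp h (\<lambda>x. G (Suc n) (h @ [x])))"
    by (rule expectation_traj_Suc)
  also have "\<dots> \<le> measure_pmf.expectation (traj n) (G n)"
    by (intro integral_mono_AE integrable_traj)
       (auto simp: AE_measure_pmf_iff dest!: valid_of_traj intro: assms)
  finally show ?case using Suc by simp
qed simp

lemma expectation_traj_eq_of_martingale:
  assumes "\<And>n h. length h = n \<Longrightarrow> valid_history h \<Longrightarrow> round_exp h (\<lambda>x. G (Suc n) (h @ [x])) = G n h"
  shows "measure_pmf.expectation (traj T) (G T) = G 0 []"
proof (induction T)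
  case (Suc n)
  have "measure_pmf.expectation (traj (Suc n)) (G (Suc n))
      = measure_pmf.expectation (traj n) (\<lambda>h. round_exp h (\<lambda>x. G (Suc n) (h @ [x])))"
    by (rule expectation_traj_Suc)
  also have "\<dots> = measure_pmf.expectation (traj n) (G n)"
    by (intro integral_cong_AE) (auto simp: AE_measure_pmf_iff dest!: valid_of_traj intro: assms)
  finally show ?case using Suc by simp
qed simp

lemma round_exp_add: "round_exp h (\<lambda>x. f x + g x) = round_exp h f + round_exp h g"
  by (simp add: round_exp_def sum.distrib add_divide_distrib distrib_left)

lemma round_exp_mult: "round_exp h (\<lambda>x. c * f x) = c * round_exp h f"
  by (simp add: round_exp_def sum_distrib_left algebra_simps sum_divide_distrib[symmetric])

lemma round_exp_sum: "finite I \<Longrightarrow> round_exp h (\<lambda>x. \<Sum>i\<in>I. f i x) = (\<Sum>i\<in>I. round_exp h (f i))"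
  by (induction I rule: finite_induct) (simp_all add: round_exp_add, simp add: round_exp_def)

lemma round_exp_const: "round_exp h (\<lambda>x. c) = c"
proof -
  have "round_exp h (\<lambda>x. c) = (\<Sum>A\<in>{1..K}. prob h A * c)"
    unfolding round_exp_def using K_minus_one_ge_one
    by (intro sum.cong refl) (simp add: card_Diff_singleton of_nat_diff)
  also have "\<dots> = c" using sum_prob[of h] by (simp add: sum_distrib_right[symmetric])
  finally show ?thesis .
qed

lemma round_exp_mono:
  "(\<And>A B. A \<in> {1..K} \<Longrightarrow> B \<in> {1..K} \<Longrightarrow> f (A, B) \<le> g (A, B)) \<Longrightarrow> round_exp h f \<le> round_exp h g"
  unfolding round_exp_def using K_minus_one_ge_one
  by (intro sum_mono mult_left_mono divide_right_mono less_imp_le[OF prob_pos]) auto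

definition max_S :: "(nat \<times> nat) list \<Rightarrow> real" where
  "max_S h = Max (S h ` {1..K})"

lemma D_snoc: "D (h @ [x]) a = D h a + est (Suc (length h)) x a"
  by (simp add: soda_D_def nth_append)

lemma S_snoc: "S (h @ [x]) a = S h a + (est (Suc (length h)) x a)\<^sup>2"
  by (simp add: soda_S_def nth_append)

lemma D_Nil [simp]: "D [] a = 0"
  by (simp add: soda_D_def)

lemma S_Nil [simp]: "S [] a = 0"
  by (simp add: soda_S_def)

lemma abs_est_le:
  assumes "x \<in> {1..K} \<times> {1..K}" "t \<ge> 1"
  shows "\<bar>est t x a\<bar> \<le> real K - 1"
proof -
  have "fst x \<in> {1..K}" "snd x \<in> {1..K}" using assms(1) by auto
  then have "0 \<le> l t (snd x) \<and> l t (snd x) \<le> 1" "0 \<le> l t (fst x) \<and> l t (fst x) \<le> 1"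
    using loss_range assms(2) by auto
  then have "\<bar>l t (snd x) - l t (fst x)\<bar> \<le> 1" by auto
  then show ?thesis using K_minus_one_ge_one unfolding soda_est_def
    by (auto simp: abs_mult mult_le_cancel_left1)
qed

lemma est_square_le:
  assumes "x \<in> {1..K} \<times> {1..K}" "t \<ge> 1"
  shows "(est t x a)\<^sup>2 \<le> (real K - 1)\<^sup>2"
  using power_mono[OF abs_est_le[OF assms, of a] abs_ge_zero, of 2] by simp

lemma S_nonneg: "S h a \<ge> 0"
  by (simp add: soda_S_def sum_nonneg)

lemma S_le_max_S: "a \<in> {1..K} \<Longrightarrow> S h a \<le> max_S h"
  unfolding max_S_def by (rule Max_ge) auto

lemma max_S_nonneg: "max_S h \<ge> 0"
  using S_le_max_S[of 1 h] S_nonneg[of h 1] two_le_K by auto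

lemma max_S_le_iff: "max_S h \<le> c \<longleftrightarrow> (\<forall>a\<in>{1..K}. S h a \<le> c)"
  unfolding max_S_def using two_le_K by (subst Max_le_iff) auto

lemma max_S_snoc_le:
  "x \<in> {1..K} \<times> {1..K} \<Longrightarrow> max_S (h @ [x]) \<le> max_S h + (real K - 1)\<^sup>2"
proof -
  assume x: "x \<in> {1..K} \<times> {1..K}"
  show ?thesis unfolding max_S_le_iff S_snoc
    using S_le_max_S est_square_le[OF x, of "Suc (length h)"] by (auto intro: add_mono)
qed

lemma max_S_le_snoc: "max_S h \<le> max_S (h @ [x])"
  unfolding max_S_le_iff
proof
  fix a assume "a \<in> {1..K}"
  have "S h a \<le> S (h @ [x]) a" by (simp add: S_snoc)
  also have "\<dots> \<le> max_S (h @ [x])" by (rule S_le_max_S[OF \<open>a \<in> {1..K}\<close>])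
  finally show "S h a \<le> max_S (h @ [x])" .
qed

lemma eta_eq: "eta h = min (sqrt (ln (real K) / (max_S h + (real K - 1)\<^sup>2))) (1 / (2 * (real K - 1)))"
  by (simp add: soda_eta_def max_S_def)

lemma eta_pos: "eta h > 0"
  unfolding eta_eq using ln_K_pos K_minus_one_ge_one max_S_nonneg[of h]
  by (auto intro!: divide_pos_pos add_nonneg_pos)

lemma eta_le: "eta h \<le> 1 / (2 * (real K - 1))"
  unfolding eta_eq by simp

lemma eta_square_le: "(eta h)\<^sup>2 * (max_S h + (real K - 1)\<^sup>2) \<le> ln (real K)"
proof -
  have pos: "max_S h + (real K - 1)\<^sup>2 > 0"
    using max_S_nonneg[of h] K_minus_one_ge_one by (simp add: add_nonneg_pos)
  have "(eta h)\<^sup>2 \<le> (sqrt (ln (real K) / (max_S h + (real K - 1)\<^sup>2)))\<^sup>2"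
    using eta_pos[of h] unfolding eta_eq by (intro power_mono) auto
  also have "\<dots> = ln (real K) / (max_S h + (real K - 1)\<^sup>2)" using ln_K_pos pos by simp
  finally show ?thesis using pos by (simp add: field_simps)
qed

lemma eta_antimono: "max_S h \<le> max_S h' \<Longrightarrow> eta h' \<le> eta h"
  unfolding eta_eq using ln_K_pos K_minus_one_ge_one max_S_nonneg[of h]
  by (intro min.mono order_refl real_sqrt_le_mono divide_left_mono) (auto intro!: mult_pos_pos add_nonneg_pos)

section \<open>The potential and the pathwise bound\<close>

definition potential :: "real \<Rightarrow> (nat \<times> nat) list \<Rightarrow> real" where
  "potential e h = (1 / e) * ln ((\<Sum>a\<in>{1..K}. exp (- e * D h a - e\<^sup>2 * S h a)) / real K)"

definition prob_est :: "(nat \<times> nat) list \<Rightarrow> nat \<times> nat \<Rightarrow> real" where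
  "prob_est h x = (\<Sum>a\<in>{1..K}. prob h a * est (Suc (length h)) x a)"

definition cum_prob_est :: "(nat \<times> nat) list \<Rightarrow> real" where
  "cum_prob_est h = (\<Sum>s<length h. prob_est (take s h) (h ! s))"

lemma cum_prob_est_snoc: "cum_prob_est (h @ [x]) = cum_prob_est h + prob_est h x"
  by (simp add: cum_prob_est_def nth_append)

lemma sum_exp_snoc_le:
  assumes x: "x \<in> {1..K} \<times> {1..K}"
  shows "(\<Sum>a\<in>{1..K}. exp (- eta h * D (h @ [x]) a - (eta h)\<^sup>2 * S (h @ [x]) a))
    \<le> weight_sum h * (1 - eta h * prob_est h x)"
proof -
  define e where "e = eta h"
  define g where "g a = - e * D h a - e\<^sup>2 * S h a" for a
  define z where "z a = est (Suc (length h)) x a" for a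
  have weight_eq: "soda_weight K l h a = exp (g a)" for a
    unfolding g_def e_def soda_weight_def ..
  have small: "\<bar>e * z a\<bar> \<le> 1/2" for a
  proof -
    have "\<bar>e * z a\<bar> \<le> e * (real K - 1)"
      using abs_est_le[OF x] eta_pos[of h] unfolding z_def e_def by (simp add: abs_mult mult_left_mono)
    also have "\<dots> \<le> 1/2" using eta_le[of h] K_minus_one_ge_one unfolding e_def by (simp add: field_simps)
    finally show ?thesis .
  qed
  have "(\<Sum>a\<in>{1..K}. exp (- e * D (h @ [x]) a - e\<^sup>2 * S (h @ [x]) a))
      = (\<Sum>a\<in>{1..K}. exp (g a) * exp (- (e * z a) - (e * z a)\<^sup>2))"
    unfolding D_snoc S_snoc g_def z_def
    by (intro sum.cong refl) (simp add: exp_add[symmetric] algebra_simps power2_eq_square)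
  also have "\<dots> \<le> (\<Sum>a\<in>{1..K}. exp (g a) * (1 - e * z a))"
    by (intro sum_mono mult_left_mono exp_neg_minus_square_le small) auto
  also have "\<dots> = weight_sum h - e * (\<Sum>a\<in>{1..K}. exp (g a) * z a)"
    unfolding weight_sum_def weight_eq by (simp add: algebra_simps sum_subtractf sum_distrib_left)
  also have "(\<Sum>a\<in>{1..K}. exp (g a) * z a) = weight_sum h * prob_est h x"
    unfolding prob_est_def sum_distrib_left prob_def weight_eq z_def
    using weight_sum_pos[of h] by (intro sum.cong) auto
  finally show ?thesis unfolding e_def by (simp add: algebra_simps)
qed

lemma potential_snoc_le:
  assumes x: "x \<in> {1..K} \<times> {1..K}"
  shows "potential (eta h) (h @ [x]) \<le> potential (eta h) h - prob_est h x"
proof -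
  define e where "e = eta h"
  define P where "P = prob_est h x"
  define V where "V = (\<Sum>a\<in>{1..K}. exp (- e * D (h @ [x]) a - e\<^sup>2 * S (h @ [x]) a))"
  have e0: "e > 0" unfolding e_def by (rule eta_pos)
  have V_pos: "V > 0" unfolding V_def using two_le_K by (intro sum_pos) auto
  have V_le: "V \<le> weight_sum h * (1 - e * P)"
    unfolding V_def e_def P_def by (rule sum_exp_snoc_le[OF x])
  have one_minus_pos: "1 - e * P > 0"
    using V_pos V_le weight_sum_pos[of h] by (smt (verit) mult_nonneg_nonpos)
  have "ln (V / real K) \<le> ln (weight_sum h * (1 - e * P) / real K)"
    using V_pos V_le two_le_K by (intro ln_mono divide_right_mono) auto
  also have "\<dots> = ln (weight_sum h / real K) + ln (1 - e * P)"
    using weight_sum_pos[of h] one_minus_pos two_le_K by (simp add: ln_mult ln_div)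
  also have "ln (1 - e * P) \<le> - e * P" using ln_le_minus_one[OF one_minus_pos] by simp
  finally have "(1/e) * ln (V / real K) \<le> (1/e) * (ln (weight_sum h / real K) - e * P)"
    using e0 by (intro mult_left_mono) auto
  also have "\<dots> = (1/e) * ln (weight_sum h / real K) - P" using e0 by (simp add: field_simps)
  finally show ?thesis
    unfolding potential_def e_def[symmetric] V_def[symmetric] P_def
    by (simp add: weight_sum_def soda_weight_def e_def)
qed

lemma potential_le_of_eta_le:
  assumes "0 < e'" "e' \<le> e"
  shows "potential e' h \<le> potential e h + (e - e') * max_S h"
proof -
  have e0: "e > 0" using assms by simp
  define g where "g a = - e * D h a - e\<^sup>2 * S h a" for a
  define \<alpha> where "\<alpha> = e' / e"
  have \<alpha>: "0 < \<alpha>" "\<alpha> \<le> 1" using assms unfolding \<alpha>_def by auto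
  define m where "m = (\<Sum>a\<in>{1..K}. exp (g a)) / real K"
  have m0: "m > 0" unfolding m_def using two_le_K by (intro divide_pos_pos sum_pos) auto
  have each: "exp (- e' * D h a - e'\<^sup>2 * S h a) \<le> exp (\<alpha> * g a) * exp (e' * (e - e') * max_S h)"
    if a: "a \<in> {1..K}" for a
  proof -
    have "- e' * D h a - e'\<^sup>2 * S h a = \<alpha> * g a + e' * (e - e') * S h a"
      unfolding g_def \<alpha>_def using e0 by (simp add: field_simps power2_eq_square)
    also have "\<dots> \<le> \<alpha> * g a + e' * (e - e') * max_S h"
      using S_le_max_S[OF a, of h] assms by (intro add_left_mono mult_left_mono) auto
    finally show ?thesis by (simp add: exp_add[symmetric])
  qed
  have "exp (g a) powr \<alpha> = exp (\<alpha> * g a)" for a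
    by (simp add: powr_def)
  then have mean: "(\<Sum>a\<in>{1..K}. exp (\<alpha> * g a)) \<le> real K * m powr \<alpha>"
    using sum_powr_le_mean_powr[of "{1..K}" "\<lambda>a. exp (g a)" \<alpha>] \<alpha> two_le_K unfolding m_def by simp
  define V where "V = (\<Sum>a\<in>{1..K}. exp (- e' * D h a - e'\<^sup>2 * S h a))"
  have V0: "V > 0" unfolding V_def using two_le_K by (intro sum_pos) auto
  have "V \<le> (\<Sum>a\<in>{1..K}. exp (\<alpha> * g a)) * exp (e' * (e - e') * max_S h)"
    unfolding V_def sum_distrib_right by (intro sum_mono each)
  also have "\<dots> \<le> real K * m powr \<alpha> * exp (e' * (e - e') * max_S h)"
    using mean by (intro mult_right_mono) auto
  finally have "ln (V / real K) \<le> ln (m powr \<alpha> * exp (e' * (e - e') * max_S h))"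
    using V0 two_le_K by (intro ln_mono) (auto simp: field_simps)
  also have "\<dots> = \<alpha> * ln m + e' * (e - e') * max_S h" using m0 by (simp add: ln_mult ln_powr)
  finally have "(1/e') * ln (V / real K) \<le> (1/e') * (\<alpha> * ln m + e' * (e - e') * max_S h)"
    using assms by (intro mult_left_mono) auto
  also have "\<dots> = (1/e) * ln m + (e - e') * max_S h" unfolding \<alpha>_def using assms by (simp add: field_simps)
  finally show ?thesis unfolding potential_def V_def[symmetric] m_def g_def .
qed

lemma potential_eta_le:
  "valid_history h \<Longrightarrow>
     potential (eta h) h + cum_prob_est h \<le> ln (real K) / eta h - 2 * (real K - 1) * ln (real K)"
proof (induction h rule: rev_induct)
  case Nil
  have "2 * (real K - 1) \<le> 1 / eta []"
    using eta_le[of "[]"] eta_pos[of "[]"] K_minus_one_ge_one by (simp add: field_simps)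
  then have "2 * (real K - 1) * ln (real K) \<le> ln (real K) / eta []"
    using ln_K_pos by (simp add: divide_inverse mult.commute mult_right_mono)
  then show ?case by (simp add: potential_def cum_prob_est_def)
next
  case (snoc x h)
  have h: "valid_history h" and x: "x \<in> {1..K} \<times> {1..K}"
    using snoc.prems by (auto simp: valid_history_def)
  define e where "e = eta h"
  define e' where "e' = eta (h @ [x])"
  have e0: "e > 0" "e' > 0" unfolding e_def e'_def by (rule eta_pos)+
  have e'_le: "e' \<le> e" unfolding e_def e'_def by (rule eta_antimono[OF max_S_le_snoc])
  have "max_S (h @ [x]) \<le> ln (real K) / e\<^sup>2"
  proof -
    have "e\<^sup>2 * max_S (h @ [x]) \<le> e\<^sup>2 * (max_S h + (real K - 1)\<^sup>2)"
      using max_S_snoc_le[OF x] by (intro mult_left_mono) auto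
    also have "\<dots> \<le> ln (real K)" unfolding e_def by (rule eta_square_le)
    finally show ?thesis using e0 by (simp add: field_simps)
  qed
  then have "(e - e') * max_S (h @ [x]) \<le> (e - e') * (ln (real K) / (e * e'))"
    using e'_le e0 ln_K_pos
    by (intro mult_left_mono order_trans[OF _ divide_left_mono[of "e * e'" "e\<^sup>2"]])
       (auto simp: power2_eq_square intro!: mult_left_mono)
  also have "\<dots> = ln (real K) / e' - ln (real K) / e" using e0 by (simp add: field_simps)
  finally have rate_change: "(e - e') * max_S (h @ [x]) \<le> ln (real K) / e' - ln (real K) / e" .
  have "potential e' (h @ [x]) \<le> potential e (h @ [x]) + (e - e') * max_S (h @ [x])"
    by (rule potential_le_of_eta_le[OF e0(2) e'_le])
  also have "potential e (h @ [x]) \<le> potential e h - prob_est h x"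
    unfolding e_def by (rule potential_snoc_le[OF x])
  finally show ?case
    using snoc.IH[OF h] rate_change unfolding e_def[symmetric] e'_def[symmetric] cum_prob_est_snoc
    by linarith
qed

lemma potential_ge:
  assumes "e > 0" "a \<in> {1..K}"
  shows "- D h a - e * S h a - ln (real K) / e \<le> potential e h"
proof -
  have "exp (- e * D h a - e\<^sup>2 * S h a) \<le> (\<Sum>b\<in>{1..K}. exp (- e * D h b - e\<^sup>2 * S h b))"
    using assms(2) by (intro member_le_sum) auto
  then have "ln (exp (- e * D h a - e\<^sup>2 * S h a) / real K)
      \<le> ln ((\<Sum>b\<in>{1..K}. exp (- e * D h b - e\<^sup>2 * S h b)) / real K)"
    using two_le_K by (intro ln_mono divide_right_mono) auto
  then have "(1/e) * ln (exp (- e * D h a - e\<^sup>2 * S h a) / real K) \<le> potential e h"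
    unfolding potential_def using assms(1) by (intro mult_left_mono) auto
  moreover have "(1/e) * ln (exp (- e * D h a - e\<^sup>2 * S h a) / real K) = - D h a - e * S h a - ln (real K) / e"
    using assms(1) two_le_K by (simp add: ln_div field_simps power2_eq_square)
  ultimately show ?thesis by simp
qed

lemma eta_mult_S_le: "a \<in> {1..K} \<Longrightarrow> eta h * S h a \<le> sqrt (ln (real K) * max_S h)"
proof -
  assume a: "a \<in> {1..K}"
  have "(eta h * max_S h)\<^sup>2 = (eta h)\<^sup>2 * max_S h * max_S h" by (simp add: power2_eq_square)
  also have "\<dots> \<le> (eta h)\<^sup>2 * (max_S h + (real K - 1)\<^sup>2) * max_S h"
    using max_S_nonneg[of h] by (intro mult_right_mono mult_left_mono) auto
  also have "\<dots> \<le> ln (real K) * max_S h"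
    using max_S_nonneg[of h] by (intro mult_right_mono eta_square_le) auto
  finally have "eta h * max_S h \<le> sqrt (ln (real K) * max_S h)" by (simp add: real_le_rsqrt)
  moreover have "eta h * S h a \<le> eta h * max_S h"
    using S_le_max_S[OF a] eta_pos[of h] by (intro mult_left_mono) auto
  ultimately show ?thesis by simp
qed

lemma ln_K_div_eta_le: "ln (real K) / eta h \<le> sqrt (ln (real K) * max_S h) + 2 * (real K - 1) * ln (real K)"
proof -
  have root_nonneg: "sqrt (ln (real K) * max_S h) \<ge> 0"
    using ln_K_pos max_S_nonneg[of h] by simp
  consider "eta h = 1 / (2 * (real K - 1))" | "eta h = sqrt (ln (real K) / (max_S h + (real K - 1)\<^sup>2))"
    unfolding eta_eq by linarith
  then show ?thesis
  proof cases
    case 1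
    then show ?thesis using K_minus_one_ge_one root_nonneg by simp
  next
    case 2
    define X where "X = max_S h + (real K - 1)\<^sup>2"
    have X0: "X > 0" unfolding X_def using max_S_nonneg[of h] K_minus_one_ge_one by (simp add: add_nonneg_pos)
    have "eta h * sqrt (ln (real K) * X) = sqrt (ln (real K) / X * (ln (real K) * X))"
      unfolding 2 X_def[symmetric] by (rule real_sqrt_mult[symmetric])
    also have "\<dots> = ln (real K)" using X0 ln_K_pos by (simp add: power2_eq_square)
    finally have "ln (real K) / eta h = sqrt (ln (real K) * max_S h + ln (real K) * (real K - 1)\<^sup>2)"
      using eta_pos[of h] unfolding X_def by (auto simp: field_simps)
    also have "\<dots> \<le> sqrt (ln (real K) * max_S h) + sqrt (ln (real K) * (real K - 1)\<^sup>2)"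
      using ln_K_pos max_S_nonneg[of h] by (intro sqrt_add_le_add_sqrt) auto
    also have "sqrt (ln (real K) * (real K - 1)\<^sup>2) = sqrt (ln (real K)) * (real K - 1)"
      using K_minus_one_ge_one by (simp add: real_sqrt_mult)
    also have "\<dots> \<le> 2 * ln (real K) * (real K - 1)"
      using sqrt_ln_le_twice_ln[of "real K"] two_le_K K_minus_one_ge_one by (intro mult_right_mono) auto
    finally show ?thesis by (simp add: algebra_simps)
  qed
qed

lemma cum_prob_est_minus_D_le:
  assumes "valid_history h" "a \<in> {1..K}"
  shows "cum_prob_est h - D h a \<le> 3 * sqrt (ln (real K) * max_S h) + 2 * (real K - 1) * ln (real K)"
  using potential_ge[where h = h, OF eta_pos[of h] assms(2)] potential_eta_le[OF assms(1)]
    eta_mult_S_le[OF assms(2), of h] ln_K_div_eta_le[of h]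
  by linarith

section \<open>Unbiasedness and the regret\<close>

lemma round_exp_loss_plus_est:
  assumes a: "a \<in> {1..K}"
  shows "round_exp h (\<lambda>x. l t (fst x) + est t x a) = l t a"
proof -
  have secondary: "(\<Sum>B\<in>{1..K} - {A}. l t A + est t (A, B) a) = (real K - 1) * l t a"
    if A: "A \<in> {1..K}" for A
  proof -
    have "(\<Sum>B\<in>{1..K} - {A}. est t (A, B) a)
        = (real K - 1) * (\<Sum>B\<in>{1..K} - {A}. if B = a then l t B - l t A else 0)"
      unfolding sum_distrib_left by (intro sum.cong) (auto simp: soda_est_def)
    also have "(\<Sum>B\<in>{1..K} - {A}. if B = a then l t B - l t A else 0)
        = (\<Sum>B\<in>{1..K}. if B = a then l t B - l t A else 0)"
      using A by (simp add: sum_diff1)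
    also have "\<dots> = l t a - l t A" using a by simp
    finally have "(\<Sum>B\<in>{1..K} - {A}. est t (A, B) a) = (real K - 1) * (l t a - l t A)" .
    moreover have "(\<Sum>B\<in>{1..K} - {A}. l t A) = (real K - 1) * l t A"
      using A two_le_K by (simp add: card_Diff_singleton of_nat_diff)
    ultimately show ?thesis by (simp add: sum.distrib algebra_simps)
  qed
  have "round_exp h (\<lambda>x. l t (fst x) + est t x a) = (\<Sum>A\<in>{1..K}. prob h A * l t a)"
    unfolding round_exp_def using secondary K_minus_one_ge_one by (intro sum.cong refl) simp
  also have "\<dots> = l t a" using sum_prob[of h] by (simp add: sum_distrib_right[symmetric])
  finally show ?thesis .
qed

lemma round_exp_prob_est: "round_exp h (prob_est h) = 0"
proof -
  define t where "t = Suc (length h)"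
  have prob_est_eq: "prob_est h (A, B) = prob h B * (real K - 1) * (l t B - l t A)" if "B \<in> {1..K}" for A B
  proof -
    have "prob_est h (A, B) = (\<Sum>a\<in>{1..K}. if a = B then prob h B * (real K - 1) * (l t B - l t A) else 0)"
      unfolding prob_est_def t_def by (intro sum.cong) (auto simp: soda_est_def)
    then show ?thesis using that by simp
  qed
  have "round_exp h (prob_est h) = (\<Sum>A\<in>{1..K}. \<Sum>B\<in>{1..K}. prob h A * prob h B * (l t B - l t A))"
    unfolding round_exp_def
  proof (intro sum.cong refl)
    fix A assume A: "A \<in> {1..K}"
    have "(\<Sum>B\<in>{1..K} - {A}. prob_est h (A, B)) = (\<Sum>B\<in>{1..K}. prob h B * (real K - 1) * (l t B - l t A))"
      using A by (simp add: prob_est_eq sum_diff1)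
    then show "prob h A * ((\<Sum>B\<in>{1..K} - {A}. prob_est h (A, B)) / (real K - 1))
        = (\<Sum>B\<in>{1..K}. prob h A * prob h B * (l t B - l t A))"
      using K_minus_one_ge_one by (simp add: sum_distrib_left sum_divide_distrib[symmetric] field_simps)
  qed
  also have "\<dots> = (\<Sum>A\<in>{1..K}. prob h A * (\<Sum>B\<in>{1..K}. prob h B * l t B))
      - (\<Sum>A\<in>{1..K}. prob h A * l t A * (\<Sum>B\<in>{1..K}. prob h B))"
    by (simp add: sum_distrib_left sum_subtractf[symmetric] algebra_simps)
  also have "\<dots> = 0" using sum_prob[of h] by (simp add: sum_distrib_right[symmetric])
  finally show ?thesis .
qed

definition learner_loss :: "nat \<Rightarrow> (nat \<times> nat) list \<Rightarrow> real" where
  "learner_loss n h = (\<Sum>t\<in>{1..n}. l t (fst (h ! (t - 1))))"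

lemma learner_loss_snoc: "length h = n \<Longrightarrow> learner_loss (Suc n) (h @ [x]) = learner_loss n h + l (Suc n) (fst x)"
proof -
  assume n: "length h = n"
  have "(\<Sum>t\<in>{1..n}. l t (fst ((h @ [x]) ! (t - 1)))) = learner_loss n h"
    unfolding learner_loss_def using n by (intro sum.cong refl) (auto simp: nth_append)
  then show ?thesis unfolding learner_loss_def using n by (simp add: sum.cl_ivl_Suc nth_append)
qed

lemma expectation_learner_loss_plus_D:
  assumes a: "a \<in> {1..K}"
  shows "measure_pmf.expectation (traj T) (\<lambda>h. learner_loss T h + D h a) = (\<Sum>t\<in>{1..T}. l t a)"
proof -
  define G where "G n h = learner_loss n h + D h a - (\<Sum>t\<in>{1..n}. l t a)" for n h
  have "measure_pmf.expectation (traj T) (G T) = G 0 []"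
  proof (rule expectation_traj_eq_of_martingale)
    fix n and h :: "(nat \<times> nat) list" assume "length h = n"
    then have "round_exp h (\<lambda>x. G (Suc n) (h @ [x]))
        = round_exp h (\<lambda>x. (G n h - l (Suc n) a) + (l (Suc n) (fst x) + est (Suc n) x a))"
      unfolding G_def by (simp add: learner_loss_snoc D_snoc algebra_simps)
    also have "\<dots> = G n h"
      using round_exp_add[of h "\<lambda>_. G n h - l (Suc n) a" "\<lambda>x. l (Suc n) (fst x) + est (Suc n) x a"]
      by (simp add: round_exp_const round_exp_loss_plus_est[OF a])
    finally show "round_exp h (\<lambda>x. G (Suc n) (h @ [x])) = G n h" .
  qed
  moreover have "measure_pmf.expectation (traj T) (G T)
      = measure_pmf.expectation (traj T) (\<lambda>h. learner_loss T h + D h a) - (\<Sum>t\<in>{1..T}. l t a)"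
    unfolding G_def by (simp only: Bochner_Integration.integral_diff[OF integrable_traj integrable_traj]) simp
  ultimately show ?thesis by (simp add: G_def learner_loss_def)
qed

lemma expectation_cum_prob_est: "measure_pmf.expectation (traj T) cum_prob_est = 0"
proof -
  have "measure_pmf.expectation (traj T) ((\<lambda>n. cum_prob_est) T) = cum_prob_est []"
    by (rule expectation_traj_eq_of_martingale)
       (simp add: cum_prob_est_snoc round_exp_add round_exp_const round_exp_prob_est)
  then show ?thesis by (simp add: cum_prob_est_def)
qed

lemma soda_regret_le_expectation_max_S:
  "soda_regret K l T \<le>
     3 * measure_pmf.expectation (traj T) (\<lambda>h. sqrt (ln (real K) * max_S h)) + 2 * (real K - 1) * ln (real K)"
proof -
  let ?E = "measure_pmf.expectation (traj T)"
  obtain a where a: "a \<in> {1..K}"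
    and best: "Min ((\<lambda>a. \<Sum>t\<in>{1..T}. l t a) ` {1..K}) = (\<Sum>t\<in>{1..T}. l t a)"
    using Min_in[of "(\<lambda>a. \<Sum>t\<in>{1..T}. l t a) ` {1..K}"] two_le_K by fastforce
  have "soda_regret K l T = ?E (\<lambda>h. learner_loss T h) - ?E (\<lambda>h. learner_loss T h + D h a)"
    using expectation_learner_loss_plus_D[OF a] unfolding soda_regret_def best learner_loss_def by simp
  also have "\<dots> = ?E (\<lambda>h. cum_prob_est h - D h a)"
    by (simp add: integral_add expectation_cum_prob_est)
  also have "\<dots> \<le> ?E (\<lambda>h. 3 * sqrt (ln (real K) * max_S h) + 2 * (real K - 1) * ln (real K))"
    unfolding AE_measure_pmf_iff[symmetric]
    by (intro integral_mono_AE integrable_traj)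
       (use cum_prob_est_minus_D_le[OF _ a] valid_of_traj in \<open>auto simp: AE_measure_pmf_iff simp del: of_nat_diff\<close>)
  also have "\<dots> = 3 * ?E (\<lambda>h. sqrt (ln (real K) * max_S h)) + 2 * (real K - 1) * ln (real K)"
    by (simp add: integral_add)
  finally show ?thesis .
qed

section \<open>How often an arm is the secondary arm\<close>

definition sec_count :: "(nat \<times> nat) list \<Rightarrow> nat \<Rightarrow> real" where
  "sec_count h a = (\<Sum>s<length h. if snd (h ! s) = a then 1 else 0)"

definition max_sec_count :: "(nat \<times> nat) list \<Rightarrow> real" where
  "max_sec_count h = Max (sec_count h ` {1..K})"

lemma sec_count_snoc: "sec_count (h @ [x]) a = sec_count h a + (if snd x = a then 1 else 0)"
  by (simp add: sec_count_def nth_append)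

lemma sec_count_le_max: "a \<in> {1..K} \<Longrightarrow> sec_count h a \<le> max_sec_count h"
  unfolding max_sec_count_def by (rule Max_ge) auto

lemma max_sec_count_nonneg: "max_sec_count h \<ge> 0"
proof -
  have "sec_count h 1 \<ge> 0" by (simp add: sec_count_def sum_nonneg)
  then show ?thesis using sec_count_le_max[of 1 h] two_le_K by simp
qed

lemma round_exp_secondary_le:
  assumes "a \<in> {1..K}"
  shows "round_exp h (\<lambda>x. if snd x = a then 1 else 0) \<le> 1 / (real K - 1)"
proof -
  have "round_exp h (\<lambda>x. if snd x = a then 1 else 0)
      = (\<Sum>A\<in>{1..K}. prob h A * ((\<Sum>B\<in>{1..K} - {A}. if B = a then 1 else 0) / (real K - 1)))"
    by (simp add: round_exp_def)
  also have "\<dots> \<le> (\<Sum>A\<in>{1..K}. prob h A * (1 / (real K - 1)))"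
    using K_minus_one_ge_one
    by (intro sum_mono mult_left_mono less_imp_le[OF prob_pos] divide_right_mono) (auto simp: sum.delta)
  also have "\<dots> = 1 / (real K - 1)" using sum_prob[of h] by (simp add: sum_divide_distrib[symmetric])
  finally show ?thesis .
qed

text \<open>Hoeffding's lemma for the indicator of \<open>B\<^sub>t = a\<close>, whose conditional mean is at most \<open>1/(K - 1)\<close>.\<close>
lemma round_exp_exp_secondary_le:
  assumes a: "a \<in> {1..K}" and lam: "lam \<ge> 0"
  shows "round_exp h (\<lambda>x. exp (lam * (if snd x = a then 1 else 0))) \<le> exp (lam / (real K - 1) + lam\<^sup>2 / 8)"
proof -
  define P where "P = round_exp h (\<lambda>x. if snd x = a then 1 else 0)"
  have P0: "P \<ge> 0"
    using round_exp_mono[of "\<lambda>_. 0" "\<lambda>x. if snd x = a then 1 else 0" h] unfolding P_def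
    by (simp add: round_exp_const)
  have "round_exp h (\<lambda>x. exp (lam * (if snd x = a then 1 else 0)))
      = round_exp h (\<lambda>x. 1 + (exp lam - 1) * (if snd x = a then 1 else 0))"
    by (intro arg_cong[where f = "round_exp h"] ext) simp
  also have "\<dots> = 1 + P * (exp lam - 1)" unfolding P_def by (simp add: round_exp_add round_exp_mult round_exp_const)
  also have "\<dots> \<le> exp (lam * P + lam\<^sup>2 / 8)"
  proof -
    have pos: "1 + P * (exp lam - 1) > 0" using P0 lam by (intro add_pos_nonneg mult_nonneg_nonneg) auto
    have "ln (1 + P * (exp lam - 1)) \<le> lam * P + lam\<^sup>2 / 8"
      using Hoeffdings_lemma_aux[OF lam P0] by simp
    then show ?thesis using pos by (metis exp_le_cancel_iff exp_ln)
  qed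
  also have "\<dots> \<le> exp (lam / (real K - 1) + lam\<^sup>2 / 8)"
    using mult_left_mono[OF round_exp_secondary_le[OF a, of h] lam] unfolding P_def by simp
  finally show ?thesis .
qed

lemma expectation_sum_exp_sec_count_le:
  assumes lam: "lam \<ge> 0"
  defines "c \<equiv> lam / (real K - 1) + lam\<^sup>2 / 8"
  shows "measure_pmf.expectation (traj T) (\<lambda>h. \<Sum>a\<in>{1..K}. exp (lam * sec_count h a)) \<le> real K * exp (real T * c)"
proof -
  define G where "G n h = exp (- (real n * c)) * (\<Sum>a\<in>{1..K}. exp (lam * sec_count h a))" for n h
  have "measure_pmf.expectation (traj T) (G T) \<le> G 0 []"
  proof (rule expectation_traj_le_of_supermartingale)
    fix n and h :: "(nat \<times> nat) list"
    have "round_exp h (\<lambda>x. G (Suc n) (h @ [x]))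
        = (\<Sum>a\<in>{1..K}. (exp (- (real (Suc n) * c)) * exp (lam * sec_count h a))
            * round_exp h (\<lambda>x. exp (lam * (if snd x = a then 1 else 0))))"
      unfolding G_def
      by (simp add: sec_count_snoc sum_distrib_left distrib_left exp_add mult.assoc round_exp_sum round_exp_mult)
    also have "\<dots> \<le> (\<Sum>a\<in>{1..K}. (exp (- (real (Suc n) * c)) * exp (lam * sec_count h a)) * exp c)"
      unfolding c_def by (intro sum_mono mult_left_mono round_exp_exp_secondary_le lam) auto
    also have "\<dots> = G n h" unfolding G_def
      by (simp add: sum_distrib_left sum_distrib_right mult_ac exp_add[symmetric] algebra_simps)
    finally show "round_exp h (\<lambda>x. G (Suc n) (h @ [x])) \<le> G n h" .
  qed
  moreover have "G 0 [] = real K" by (simp add: G_def sec_count_def)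
  ultimately have "exp (- (real T * c)) * measure_pmf.expectation (traj T) (\<lambda>h. \<Sum>a\<in>{1..K}. exp (lam * sec_count h a)) \<le> real K"
    unfolding G_def by simp
  then have "exp (real T * c) * (exp (- (real T * c)) * measure_pmf.expectation (traj T) (\<lambda>h. \<Sum>a\<in>{1..K}. exp (lam * sec_count h a)))
      \<le> exp (real T * c) * real K"
    by (intro mult_left_mono) auto
  then show ?thesis by (simp add: mult.assoc[symmetric] exp_add[symmetric] mult.commute)
qed

lemma max_sec_count_le_ln_sum_exp:
  "lam > 0 \<Longrightarrow> max_sec_count h \<le> ln (\<Sum>a\<in>{1..K}. exp (lam * sec_count h a)) / lam"
proof -
  assume lam: "lam > 0"
  obtain a where "a \<in> {1..K}" "max_sec_count h = sec_count h a"
    using Max_in[of "sec_count h ` {1..K}"] two_le_K unfolding max_sec_count_def by fastforce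
  then show ?thesis using le_ln_sum_exp[OF finite_atLeastAtMost _ lam] by simp
qed

lemma expectation_max_sec_count_le_of_pos:
  assumes lam: "lam > 0"
  shows "measure_pmf.expectation (traj T) max_sec_count \<le> ln (real K) / lam + real T * (1 / (real K - 1) + lam / 8)"
proof -
  define c where "c = lam / (real K - 1) + lam\<^sup>2 / 8"
  define X where "X h = (\<Sum>a\<in>{1..K}. exp (lam * sec_count h a))" for h
  have "measure_pmf.expectation (traj T) max_sec_count \<le> measure_pmf.expectation (traj T) (\<lambda>h. ln (X h) / lam)"
    unfolding X_def by (intro integral_mono integrable_traj max_sec_count_le_ln_sum_exp lam)
  also have "\<dots> = measure_pmf.expectation (traj T) (\<lambda>h. ln (X h)) / lam"
    by simp
  also have "measure_pmf.expectation (traj T) (\<lambda>h. ln (X h)) \<le> ln (real K * exp (real T * c))"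
    using two_le_K
    by (intro expectation_ln_le finite_set_pmf_traj expectation_sum_exp_sec_count_le[OF less_imp_le[OF lam],
        folded c_def X_def]) (auto simp: X_def intro!: sum_pos)
  also have "ln (real K * exp (real T * c)) / lam = ln (real K) / lam + real T * (1 / (real K - 1) + lam / 8)"
    unfolding c_def using lam two_le_K K_minus_one_ge_one by (simp add: ln_mult field_simps power2_eq_square)
  finally show ?thesis using lam by (simp add: divide_right_mono)
qed

lemma expectation_max_sec_count_le:
  assumes "T \<ge> 1"
  shows "measure_pmf.expectation (traj T) max_sec_count \<le> real T / (real K - 1) + sqrt (real T * ln (real K) / 2)"
proof -
  define lam where "lam = sqrt (8 * ln (real K) / real T)"
  have T0: "real T > 0" using assms by simp
  have lam0: "lam > 0" unfolding lam_def using ln_K_pos T0 by simp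
  have "ln (real K) / lam + real T * lam / 8 = sqrt (real T * ln (real K) / 2)"
  proof -
    have lam_square: "real T * lam\<^sup>2 = 8 * ln (real K)" unfolding lam_def using ln_K_pos T0 by simp
    then have "ln (real K) / lam + real T * lam / 8 = real T * lam / 4"
      using lam0 by (simp add: field_simps power2_eq_square)
    also have "\<dots> = sqrt (real T * ln (real K) / 2)"
    proof (rule real_sqrt_unique[symmetric])
      have "(real T * lam / 4)\<^sup>2 = real T * (real T * lam\<^sup>2) / 16"
        by (simp add: power_mult_distrib power_divide power2_eq_square)
      then show "(real T * lam / 4)\<^sup>2 = real T * ln (real K) / 2"
        unfolding lam_square by simp
    qed (use lam0 in simp)
    finally show ?thesis .
  qed
  then show ?thesis
    using expectation_max_sec_count_le_of_pos[OF lam0, of T] by (simp add: algebra_simps)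
qed

end

section \<open>Losses of bounded effective range\<close>

locale soda_range = soda +
  fixes eps :: real
  assumes loss_diff_le: "\<forall>t\<ge>1. \<forall>a\<in>{1..K}. \<forall>a'\<in>{1..K}. \<bar>l t a - l t a'\<bar> \<le> eps"
begin

lemma eps_nonneg: "eps \<ge> 0"
  using loss_diff_le two_le_K by force

lemma S_le_sec_count:
  assumes "valid_history h"
  shows "S h a \<le> (real K - 1)\<^sup>2 * eps\<^sup>2 * sec_count h a"
  unfolding soda_S_def sec_count_def sum_distrib_left
proof (rule sum_mono)
  fix s assume "s \<in> {..<length h}"
  then have "h ! s \<in> {1..K} \<times> {1..K}" using assms nth_mem unfolding valid_history_def by blast
  then have "\<bar>l (Suc s) (snd (h ! s)) - l (Suc s) (fst (h ! s))\<bar> \<le> eps" using loss_diff_le by auto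
  then have "(l (Suc s) (snd (h ! s)) - l (Suc s) (fst (h ! s)))\<^sup>2 \<le> eps\<^sup>2"
    using power_mono[OF _ abs_ge_zero, of _ eps 2] by simp
  then have "(real K - 1)\<^sup>2 * (l (Suc s) (snd (h ! s)) - l (Suc s) (fst (h ! s)))\<^sup>2 \<le> (real K - 1)\<^sup>2 * eps\<^sup>2"
    by (intro mult_left_mono) auto
  then show "(est (Suc s) (h ! s) a)\<^sup>2 \<le> (real K - 1)\<^sup>2 * eps\<^sup>2 * (if snd (h ! s) = a then 1 else 0)"
    unfolding soda_est_def by (auto simp: power_mult_distrib)
qed

lemma max_S_le_max_sec_count:
  "valid_history h \<Longrightarrow> max_S h \<le> (real K - 1)\<^sup>2 * eps\<^sup>2 * max_sec_count h"
  unfolding max_S_le_iff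
  using S_le_sec_count sec_count_le_max by (fastforce intro: order_trans mult_left_mono)

lemma expectation_sqrt_max_S_le:
  assumes "T \<ge> 1"
  shows "measure_pmf.expectation (traj T) (\<lambda>h. sqrt (ln (real K) * max_S h))
    \<le> eps * sqrt ((real K - 1) * ln (real K)) * sqrt (real T + (real K - 1) * sqrt (real T * ln (real K) / 2))"
proof -
  let ?E = "measure_pmf.expectation (traj T)"
  have "?E (\<lambda>h. sqrt (ln (real K) * max_S h))
      \<le> ?E (\<lambda>h. eps * sqrt ((real K - 1) * ln (real K)) * sqrt ((real K - 1) * max_sec_count h))"
  proof (intro integral_mono_AE integrable_traj, unfold AE_measure_pmf_iff, intro ballI)
    fix h assume "h \<in> set_pmf (traj T)"
    then have "max_S h \<le> (real K - 1)\<^sup>2 * eps\<^sup>2 * max_sec_count h"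
      by (intro max_S_le_max_sec_count) (auto dest: valid_of_traj)
    then have "sqrt (ln (real K) * max_S h) \<le> sqrt (ln (real K) * ((real K - 1)\<^sup>2 * eps\<^sup>2 * max_sec_count h))"
      using ln_K_pos by simp
    also have "\<dots> = eps * sqrt ((real K - 1) * ln (real K)) * sqrt ((real K - 1) * max_sec_count h)"
    proof (rule real_sqrt_unique)
      have "(sqrt ((real K - 1) * ln (real K)))\<^sup>2 = (real K - 1) * ln (real K)"
        using K_minus_one_ge_one ln_K_pos by simp
      moreover have "(sqrt ((real K - 1) * max_sec_count h))\<^sup>2 = (real K - 1) * max_sec_count h"
        using K_minus_one_ge_one max_sec_count_nonneg[of h] by simp
      ultimately show "(eps * sqrt ((real K - 1) * ln (real K)) * sqrt ((real K - 1) * max_sec_count h))\<^sup>2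
          = ln (real K) * ((real K - 1)\<^sup>2 * eps\<^sup>2 * max_sec_count h)"
        unfolding power_mult_distrib by (simp add: power2_eq_square algebra_simps)
    qed (use eps_nonneg K_minus_one_ge_one ln_K_pos max_sec_count_nonneg[of h] in simp)
    finally show "sqrt (ln (real K) * max_S h) \<le> eps * sqrt ((real K - 1) * ln (real K)) * sqrt ((real K - 1) * max_sec_count h)" .
  qed
  also have "\<dots> = eps * sqrt ((real K - 1) * ln (real K)) * ?E (\<lambda>h. sqrt ((real K - 1) * max_sec_count h))"
    by simp
  also have "?E (\<lambda>h. sqrt ((real K - 1) * max_sec_count h)) \<le> sqrt (real T + (real K - 1) * sqrt (real T * ln (real K) / 2))"
  proof (rule expectation_sqrt_le[OF finite_set_pmf_traj])
    have "?E (\<lambda>h. (real K - 1) * max_sec_count h) = (real K - 1) * ?E max_sec_count"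
      by simp
    also have "\<dots> \<le> (real K - 1) * (real T / (real K - 1) + sqrt (real T * ln (real K) / 2))"
      using K_minus_one_ge_one by (intro mult_left_mono expectation_max_sec_count_le assms) simp
    also have "\<dots> = real T + (real K - 1) * sqrt (real T * ln (real K) / 2)"
      using K_minus_one_ge_one by (simp add: field_simps)
    finally show "?E (\<lambda>h. (real K - 1) * max_sec_count h) \<le> real T + (real K - 1) * sqrt (real T * ln (real K) / 2)" .
  qed (use K_minus_one_ge_one ln_K_pos max_sec_count_nonneg assms in \<open>auto intro!: add_pos_nonneg\<close>)
  finally show ?thesis using eps_nonneg ln_K_pos K_minus_one_ge_one by (simp add: mult_left_mono)
qed

lemma soda_regret_le:
  assumes "T \<ge> 1"
  shows "soda_regret K l T \<le>
    3 * eps * sqrt ((real K - 1) * ln (real K)) * sqrt (real T + (real K - 1) * sqrt (real T * ln (real K) / 2))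
    + 2 * (real K - 1) * ln (real K)"
  using soda_regret_le_expectation_max_S[of T] expectation_sqrt_max_S_le[OF assms] by simp

end

theorem theorem1:
  fixes K T :: nat and l :: "nat \<Rightarrow> nat \<Rightarrow> real" and eps :: real
  assumes "K \<ge> 2"
    and "\<forall>t\<ge>1. \<forall>a\<in>{1..K}. 0 \<le> l t a \<and> l t a \<le> 1"
    and "effective_range K l eps"
    and "T \<ge> 1"
  shows "soda_regret K l T \<le>
    4 * eps * sqrt ((real K - 1) * ln (real K)) *
      sqrt (real T + (real K - 1) * sqrt (real T) *
        (2 + sqrt (ln (sqrt (real T) * (real K - 1)) / 2)))
    + 4 * (real K - 1) * ln (real K)"
proof -
  interpret soda_range K l eps
    using assms(1-3) by unfold_locales (auto simp: effective_range_def)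
  define C where "C = eps * sqrt ((real K - 1) * ln (real K))"
  have C_nonneg: "C \<ge> 0" unfolding C_def using eps_nonneg K_minus_one_ge_one ln_K_pos by simp
  have "sqrt (real T + (real K - 1) * sqrt (real T * ln (real K) / 2))
      \<le> sqrt (real T + (real K - 1) * sqrt (real T) * (2 + sqrt (ln (sqrt (real T) * (real K - 1)) / 2)))"
    using sqrt_T_ln_le[of "real K" T] assms(1,4) K_minus_one_ge_one ln_K_pos
    by (simp add: mult.assoc mult_left_mono)
  moreover have "0 \<le> real T + (real K - 1) * sqrt (real T * ln (real K) / 2)"
    using K_minus_one_ge_one ln_K_pos by simp
  ultimately have "3 * C * sqrt (real T + (real K - 1) * sqrt (real T * ln (real K) / 2))
      \<le> 4 * C * sqrt (real T + (real K - 1) * sqrt (real T) * (2 + sqrt (ln (sqrt (real T) * (real K - 1)) / 2)))"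
    using C_nonneg by (intro mult_mono) auto
  moreover have "2 * (real K - 1) * ln (real K) \<le> 4 * (real K - 1) * ln (real K)"
    using K_minus_one_ge_one ln_K_pos by simp
  ultimately show ?thesis
    using soda_regret_le[OF assms(4)] unfolding C_def by (simp add: mult.assoc)
qed

end
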